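(* Let $r$ be an odd integer. Let $n>1$ be an odd integer with $n\equiv -r\pmod{4}$ and $n\geqslant \max\{r,4-r\}$. Then \[ \sum_{k=0}^{n-1}[8k+r]\frac{(q^r;q^4)_k^4}{(q^4;q^4)_k^4}q^{(4-2r)k} \equiv 0\pmod{\Phi_n(q)^2}. \]
   Context: $q$ is an indeterminate. The $q$-shifted factorial is $(a;q)_k=(1-a)(1-aq)\cdots(1-aq^{k-1})$ (with $(a;q)_0=1$), for any Laurent monomial $a$ in $q$. For any integer $m$ (including negative $m$), $[m]=(1-q^m)/(1-q)$. $\Phi_n(q)$ denotes the $n$-th cyclotomic polynomial. A congruence of rational functions modulo a polynomial $P(q)$, where the denominators are coprime to $P(q)$, means that $P(q)$ divides the numerator of the difference in lowest terms. *)

theory Defs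
  imports Complex_Main "HOL-Computational_Algebra.Polynomial" "HOL-Computational_Algebra.Fraction_Field"
begin

type_synonym ratfun = "complex poly fract"

definition qvar :: ratfun where
  "qvar = Fract [:0, 1:] 1"

definition qpoch :: "ratfun \<Rightarrow> ratfun \<Rightarrow> nat \<Rightarrow> ratfun" where
  "qpoch a b k = (\<Prod>j<k. 1 - a * b ^ j)"

definition qint :: "int \<Rightarrow> ratfun" where
  "qint m = (1 - qvar powi m) / (1 - qvar)"

definition cyclotomic :: "nat \<Rightarrow> complex poly" where
  "cyclotomic n = (\<Prod>k \<in> {k. 1 \<le> k \<and> k \<le> n \<and> coprime k n}.
       [:- cis (2 * pi * real k / real n), 1:])"

text \<open>x \<equiv> 0 modulo P: x = A/B with B coprime to P and P dividing A
  (equivalently, P divides the numerator of x in lowest terms).\<close>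
definition cong0_ratfun :: "ratfun \<Rightarrow> complex poly \<Rightarrow> bool" where
  "cong0_ratfun x P \<longleftrightarrow>
     (\<exists>A B. B \<noteq> 0 \<and> coprime B P \<and> P dvd A \<and> x = Fract A B)"

end

theory Submission
  imports Defs "HOL-Computational_Algebra.Polynomial_Factorial"
    "HOL-Computational_Algebra.Field_as_Ring" "HOL-Analysis.Complex_Transcendental"
begin

text \<open>Creative microscoping. With \<open>p = q^4\<close> and \<open>a = q^r\<close>, replace \<open>(a; p)_k^4 / (p; p)_k^4\<close>
  in the summand by \<open>(a w, a/w, a, a; p)_k / (p w, p/w, p, p; p)_k\<close>. These deformed terms depend on
  \<open>w\<close> only through \<open>s = w + 1/w\<close>, and \<open>s - 2 = (1 - w)^2/w\<close> is divisible by \<open>\<Phi>_n^2\<close> when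
  \<open>w = q^(3n)\<close>. As the denominators of the first \<open>n\<close> terms are prime to \<open>\<Phi>_n\<close>, the sum is
  congruent modulo \<open>\<Phi>_n^2\<close> to the deformed sum at \<open>w = q^(3n)\<close>. There \<open>a/w = p^(-N)\<close> with
  \<open>4N = 3n - r\<close>, so the deformed sum is a terminating very-well-poised series, and Jackson's
  summation evaluates it as \<open>[r] (a p, p/c; p)_N / (a p/c, p; p)_N\<close> with \<open>c = a w\<close>. Each of the
  two factors of the numerator contains a factor \<open>1 - q^m\<close> with \<open>n\<close> dividing \<open>m\<close>.\<close>

section \<open>Jackson's summation of a terminating very-well-poised series\<close>

definition q_pochhammer :: "'a::comm_ring_1 \<Rightarrow> 'a \<Rightarrow> nat \<Rightarrow> 'a" where
  "q_pochhammer a p k = (\<Prod>j<k. 1 - a * p ^ j)"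

lemma q_pochhammer_0 [simp]: "q_pochhammer a p 0 = 1"
  by (simp add: q_pochhammer_def)

lemma q_pochhammer_Suc: "q_pochhammer a p (Suc k) = q_pochhammer a p k * (1 - a * p ^ k)"
  by (simp add: q_pochhammer_def)

lemma q_pochhammer_Suc_shift: "q_pochhammer a p (Suc k) = (1 - a) * q_pochhammer (a * p) p k"
  unfolding q_pochhammer_def prod.lessThan_Suc_shift by (simp add: mult.assoc)

lemma q_pochhammer_nonzero:
  fixes a p :: "'a::field"
  assumes "\<And>j. j < k \<Longrightarrow> a * p ^ j \<noteq> 1"
  shows "q_pochhammer a p k \<noteq> 0"
  using assms by (simp add: q_pochhammer_def)

text \<open>\<open>q_falling p N k\<close> is \<open>p^(N k) (p^-N; p)_k\<close>, kept free of negative powers.\<close>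

definition q_falling :: "'a::comm_ring_1 \<Rightarrow> nat \<Rightarrow> nat \<Rightarrow> 'a" where
  "q_falling p N k = (\<Prod>j<k. p ^ N - p ^ j)"

lemma q_falling_0 [simp]: "q_falling p N 0 = 1"
  by (simp add: q_falling_def)

lemma q_falling_Suc: "q_falling p N (Suc k) = q_falling p N k * (p ^ N - p ^ k)"
  by (simp add: q_falling_def)

lemma q_falling_Suc_Suc: "q_falling p (Suc N) (Suc k) = (p ^ Suc N - 1) * p ^ k * q_falling p N k"
proof -
  have "q_falling p (Suc N) (Suc k) = (p ^ Suc N - 1) * (\<Prod>j<k. p * (p ^ N - p ^ j))"
    unfolding q_falling_def prod.lessThan_Suc_shift by (simp add: algebra_simps)
  then show ?thesis
    by (simp add: q_falling_def prod.distrib)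
qed

lemma q_falling_eq_0: "N < k \<Longrightarrow> q_falling p N k = 0"
  unfolding q_falling_def by (rule prod_zero) auto

lemma q_pochhammer_inverse_power:
  fixes p :: "'a::field"
  assumes "p \<noteq> 0"
  shows "q_pochhammer (inverse (p ^ N)) p k = q_falling p N k / p ^ (N * k)"
proof -
  have "q_pochhammer (inverse (p ^ N)) p k * (\<Prod>j<k. p ^ N) = q_falling p N k"
    unfolding q_pochhammer_def q_falling_def prod.distrib[symmetric]
    using assms by (intro prod.cong) (simp_all add: algebra_simps)
  then show ?thesis
    using assms by (simp add: eq_divide_eq power_mult)
qed

text \<open>With \<open>X = p^k\<close> and \<open>Y = p^N\<close>, \<open>r1\<close> and \<open>r2\<close> below are the ratios of the Jackson terms at
  \<open>(N, k + 1)\<close> and \<open>(N + 1, k + 1)\<close> to the term at \<open>(N, k)\<close>, and \<open>\<rho>\<close> is the ratio of the sums for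
  \<open>N + 1\<close> and \<open>N\<close>; the right-hand side is the difference of two consecutive certificate terms.\<close>

lemma jackson_certificate_identity:
  fixes X Y a c p :: "'a::field"
  assumes "1 - a*X^2 \<noteq> 0" "1 - p*X \<noteq> 0" "c - a*p*X \<noteq> 0" "1 - a*p*Y*X \<noteq> 0" "1 - a*p^2*Y*X \<noteq> 0"
    "c - a*p*Y \<noteq> 0" "1 - p*Y \<noteq> 0" "c - p*Y \<noteq> 0" "1 - a*p^2*X^2 \<noteq> 0"
  defines "\<rho> \<equiv> (1 - a*p*Y) * (c - p*Y) / ((c - a*p*Y) * (1 - p*Y))"
  defines "r1 \<equiv> (1 - a*p^2*X^2) * (1 - a*X)^2 * (1 - c*X) * (Y - X) * p
      / ((1 - a*X^2) * (1 - p*X)^2 * (c - a*p*X) * (1 - a*p*Y*X))"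
  defines "r2 \<equiv> (1 - a*p^2*X^2) * (1 - a*X)^2 * (1 - c*X) * (p*Y - 1) * X * p * (1 - a*p*Y)
      / ((1 - a*X^2) * (1 - p*X)^2 * (c - a*p*X) * (1 - a*p*Y*X) * (1 - a*p^2*Y*X))"
  shows "r2 - \<rho> * r1
    = r1 * (\<rho> * (p*Y) / (c - p*Y) * (1 - a*p*X)^2 * (1 - c*p*X) / ((1 - a*p^2*X^2) * (1 - a*p^2*Y*X)))
      - \<rho> * (p*Y) / (c - p*Y) * (1 - a*X)^2 * (1 - c*X) / ((1 - a*X^2) * (1 - a*p*Y*X))"
proof -
  define D where "D = (1 - a*X^2) * (1 - p*X)^2 * (c - a*p*X) * (1 - a*p*Y*X) * (1 - a*p^2*Y*X)
    * (c - a*p*Y) * (1 - p*Y)"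
  define V where "V = (1 - a*X)^2 * (1 - c*X) * (1 - a*p*Y)"
  have "r2 = V * ((1 - a*p^2*X^2) * (p*Y - 1) * X * p * (c - a*p*Y) * (1 - p*Y)) / D"
    unfolding r2_def V_def D_def using assms(1-8) by (simp add: divide_simps)
  moreover have "\<rho> * r1 = V * ((c - p*Y) * (1 - a*p^2*X^2) * (Y - X) * p * (1 - a*p^2*Y*X)) / D"
    unfolding r1_def \<rho>_def V_def D_def using assms(1-8) by (simp add: divide_simps)
  moreover have "r1 * (\<rho> * (p*Y) / (c - p*Y) * (1 - a*p*X)^2 * (1 - c*p*X)
        / ((1 - a*p^2*X^2) * (1 - a*p^2*Y*X)))
      = V * (p*Y * (Y - X) * p * (1 - a*p*X)^2 * (1 - c*p*X)) / D"
    unfolding r1_def \<rho>_def V_def D_def using assms by (simp add: divide_simps)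
  moreover have "\<rho> * (p*Y) / (c - p*Y) * (1 - a*X)^2 * (1 - c*X) / ((1 - a*X^2) * (1 - a*p*Y*X))
      = V * (p*Y * (1 - p*X)^2 * (c - a*p*X) * (1 - a*p^2*Y*X)) / D"
    unfolding \<rho>_def V_def D_def using assms by (simp add: divide_simps)
  moreover have "(1 - a*p^2*X^2) * (p*Y - 1) * X * p * (c - a*p*Y) * (1 - p*Y)
      - (c - p*Y) * (1 - a*p^2*X^2) * (Y - X) * p * (1 - a*p^2*Y*X)
    = p*Y * (Y - X) * p * (1 - a*p*X)^2 * (1 - c*p*X) - p*Y * (1 - p*X)^2 * (c - a*p*X) * (1 - a*p^2*Y*X)"
    by (simp add: algebra_simps power2_eq_square)
  ultimately show ?thesis
    by (simp add: diff_divide_distrib[symmetric] right_diff_distrib[symmetric])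
qed

text \<open>The \<open>k\<close>-th term of the terminating very-well-poised series
  \<open>\<Sum>k. (1 - a p^2k)/(1 - a) (a, a, c, p^-N; p)_k / (p, p, a p/c, a p^(N+1); p)_k (p^(N+1)/c)^k\<close>.\<close>

definition jackson_term :: "'a::field \<Rightarrow> 'a \<Rightarrow> 'a \<Rightarrow> nat \<Rightarrow> nat \<Rightarrow> 'a" where
  "jackson_term p a c N k =
     (1 - a * p ^ (2 * k)) / (1 - a) * q_pochhammer a p k ^ 2 * q_pochhammer c p k * q_falling p N k
     / (q_pochhammer p p k ^ 2 * q_pochhammer (a * p / c) p k * q_pochhammer (a * p ^ (N + 1)) p k)
     * (p / c) ^ k"

lemma jackson_term_eq_0: "N < k \<Longrightarrow> jackson_term p a c N k = 0"
  by (simp add: jackson_term_def q_falling_eq_0)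

definition jackson_value :: "'a::field \<Rightarrow> 'a \<Rightarrow> 'a \<Rightarrow> nat \<Rightarrow> 'a" where
  "jackson_value p a c N = q_pochhammer (a * p) p N * q_pochhammer (p / c) p N
     / (q_pochhammer (a * p / c) p N * q_pochhammer p p N)"

locale jackson_nondegenerate =
  fixes p a c :: "'a::field"
  assumes c_nonzero: "c \<noteq> 0"
    and power_ne_1: "\<And>i. 0 < i \<Longrightarrow> p ^ i \<noteq> 1"
    and a_power_ne_1: "\<And>i. a * p ^ i \<noteq> 1"
    and a_power_ne_c: "\<And>i. 0 < i \<Longrightarrow> a * p ^ i \<noteq> c"
    and power_ne_c: "\<And>i. 0 < i \<Longrightarrow> p ^ i \<noteq> c"
begin

definition ratio :: "nat \<Rightarrow> 'a" where
  "ratio N = (1 - a*p*p^N) * (c - p*p^N) / ((c - a*p*p^N) * (1 - p*p^N))"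

definition certificate :: "nat \<Rightarrow> nat \<Rightarrow> 'a" where
  "certificate N k = (case k of 0 \<Rightarrow> 0 | Suc m \<Rightarrow>
     jackson_term p a c N m * (ratio N * (p*p^N) / (c - p*p^N) * (1 - a*p^m)^2 * (1 - c*p^m)
       / ((1 - a*(p^m)^2) * (1 - a*p*p^N*p^m))))"

lemma one_minus_a_nonzero: "1 - a \<noteq> 0"
  using a_power_ne_1[of 0] by simp

lemma power_double: "p ^ (2 * k) = (p ^ k)\<^sup>2"
  by (simp flip: power_mult add: mult.commute)

lemma factors_nonzero:
  "1 - a * (p^k)^2 \<noteq> 0" "1 - a * p^2 * (p^k)^2 \<noteq> 0" "1 - p * p^k \<noteq> 0" "c - a * p * p^k \<noteq> 0"
  "1 - a * p * p^N * p^k \<noteq> 0" "1 - a * p^2 * p^N * p^k \<noteq> 0"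
  "1 - a * p * p^N \<noteq> 0" "c - a * p * p^N \<noteq> 0" "1 - p * p^N \<noteq> 0" "c - p * p^N \<noteq> 0"
  using a_power_ne_1[of "2 * k", unfolded power_double]
    a_power_ne_1[of "2 * Suc k", unfolded power_double] power_ne_1[of "Suc k"]
    a_power_ne_c[of "Suc k"] a_power_ne_1[of "Suc (N + k)"] a_power_ne_1[of "Suc (Suc (N + k))"]
    a_power_ne_1[of "Suc N"] a_power_ne_c[of "Suc N"] power_ne_1[of "Suc N"] power_ne_c[of "Suc N"]
  by (simp_all add: power_add power_mult_distrib power2_eq_square mult_ac)

lemma jackson_value_Suc: "jackson_value p a c (Suc N) = ratio N * jackson_value p a c N"
proof -
  have "jackson_value p a c (Suc N) = jackson_value p a c N
      * ((1 - a * p * p ^ N) * (1 - p / c * p ^ N) / ((1 - a * p / c * p ^ N) * (1 - p * p ^ N)))"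
    unfolding jackson_value_def q_pochhammer_Suc by (simp add: ac_simps times_divide_times_eq)
  also have "(1 - a * p * p ^ N) * (1 - p / c * p ^ N) / ((1 - a * p / c * p ^ N) * (1 - p * p ^ N))
      = ratio N"
    using c_nonzero factors_nonzero(8,9) by (simp add: ratio_def divide_simps)
  finally show ?thesis
    by (simp only: mult.commute)
qed

lemma q_pochhammer_p_nonzero: "q_pochhammer p p k \<noteq> 0"
  by (rule q_pochhammer_nonzero) (use power_ne_1[of "Suc _"] in auto)

lemma q_pochhammer_a_p_div_c_nonzero: "q_pochhammer (a * p / c) p k \<noteq> 0"
proof (rule q_pochhammer_nonzero)
  fix j
  show "a * p / c * p ^ j \<noteq> 1"
    using a_power_ne_c[of "Suc j"] c_nonzero by (simp add: field_simps)
qed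

lemma q_pochhammer_a_power_nonzero: "q_pochhammer (a * p ^ M) p k \<noteq> 0"
  by (rule q_pochhammer_nonzero) (use a_power_ne_1 in \<open>simp add: mult.assoc power_add[symmetric]\<close>)

lemma jackson_term_Suc:
  "jackson_term p a c N (Suc k) = jackson_term p a c N k
    * ((1 - a*p^2*(p^k)^2) * (1 - a*p^k)^2 * (1 - c*p^k) * (p^N - p^k) * p
       / ((1 - a*(p^k)^2) * (1 - p*p^k)^2 * (c - a*p*p^k) * (1 - a*p*p^N*p^k)))"
proof -
  have pow: "p ^ (2 * Suc k) = p^2 * (p^k)^2" "p ^ (N + 1) = p * p ^ N"
    by (simp_all flip: power_add power_mult add: mult.commute)
  have "1 - a * p / c * p ^ k = (c - a * p * p ^ k) / c"
    using c_nonzero by (simp add: field_simps)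
  then show ?thesis
    using c_nonzero one_minus_a_nonzero q_pochhammer_p_nonzero q_pochhammer_a_p_div_c_nonzero
      q_pochhammer_a_power_nonzero factors_nonzero
    unfolding jackson_term_def q_pochhammer_Suc q_falling_Suc pow power_double
    by (simp add: divide_simps) (simp add: algebra_simps)
qed

lemma jackson_term_Suc_Suc:
  "jackson_term p a c (Suc N) (Suc k) = jackson_term p a c N k
    * ((1 - a*p^2*(p^k)^2) * (1 - a*p^k)^2 * (1 - c*p^k) * (p*p^N - 1) * p^k * p * (1 - a*p*p^N)
       / ((1 - a*(p^k)^2) * (1 - p*p^k)^2 * (c - a*p*p^k) * (1 - a*p*p^N*p^k)
          * (1 - a*p^2*p^N*p^k)))"
proof -
  have pow: "p ^ (2 * Suc k) = p^2 * (p^k)^2" "p ^ (N + 1) = p * p ^ N"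
    "p ^ (Suc N + 1) = p^2 * p ^ N"
    by (simp_all flip: power_add power_mult add: mult.commute)
  have "(1 - a * p * p ^ N) * q_pochhammer (a * p ^ (Suc N + 1)) p (Suc k)
      = q_pochhammer (a * p ^ (N + 1)) p (Suc (Suc k))"
    by (simp add: q_pochhammer_Suc_shift pow mult_ac)
  also have "\<dots> = q_pochhammer (a * p ^ (N + 1)) p k * (1 - a*p*p^N*p^k) * (1 - a*p^2*p^N*p^k)"
    by (simp add: q_pochhammer_Suc pow power2_eq_square mult_ac)
  finally have shift: "q_pochhammer (a * p ^ (Suc N + 1)) p (Suc k)
      = q_pochhammer (a * p ^ (N + 1)) p k * (1 - a*p*p^N*p^k) * (1 - a*p^2*p^N*p^k) / (1 - a*p*p^N)"
    using factors_nonzero(7) by (simp add: eq_divide_eq mult_ac)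
  have "1 - a * p / c * p ^ k = (c - a * p * p ^ k) / c"
    using c_nonzero by (simp add: field_simps)
  then show ?thesis
    using c_nonzero one_minus_a_nonzero q_pochhammer_p_nonzero q_pochhammer_a_p_div_c_nonzero
      q_pochhammer_a_power_nonzero factors_nonzero
    unfolding jackson_term_def shift unfolding q_pochhammer_Suc q_falling_Suc_Suc pow power_double
    by (simp add: divide_simps)
qed

lemma certificate_0 [simp]: "certificate N 0 = 0"
  by (simp add: certificate_def)

lemma certificate_Suc_0: "certificate N (Suc 0) = 1 - ratio N"
proof -
  have "1 - ratio N
      = ratio N * (p * p^N) / (c - p * p^N) * (1 - a)\<^sup>2 * (1 - c) / ((1 - a) * (1 - a * p * p^N))"
    using one_minus_a_nonzero factors_nonzero(7-10) unfolding ratio_def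
    by (simp add: divide_simps) (simp add: algebra_simps power2_eq_square)
  then show ?thesis
    using one_minus_a_nonzero by (simp add: jackson_term_def certificate_def mult.assoc)
qed

lemma certificate_telescopes:
  "jackson_term p a c (Suc N) k - ratio N * jackson_term p a c N k
    = certificate N (Suc k) - certificate N k"
proof (cases k)
  case 0
  then show ?thesis
    using one_minus_a_nonzero by (simp add: jackson_term_def certificate_Suc_0)
next
  case (Suc m)
  define X Y where "X = p ^ m" and "Y = p ^ N"
  define t where "t = jackson_term p a c N m"
  define r1 where "r1 = (1 - a*p^2*X^2) * (1 - a*X)^2 * (1 - c*X) * (Y - X) * p
      / ((1 - a*X^2) * (1 - p*X)^2 * (c - a*p*X) * (1 - a*p*Y*X))"
  define r2 where "r2 = (1 - a*p^2*X^2) * (1 - a*X)^2 * (1 - c*X) * (p*Y - 1) * X * p * (1 - a*p*Y)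
      / ((1 - a*X^2) * (1 - p*X)^2 * (c - a*p*X) * (1 - a*p*Y*X) * (1 - a*p^2*Y*X))"
  define R1 where "R1 = ratio N * (p*Y) / (c - p*Y) * (1 - a*p*X)^2 * (1 - c*p*X)
      / ((1 - a*p^2*X^2) * (1 - a*p^2*Y*X))"
  define R0 where "R0 = ratio N * (p*Y) / (c - p*Y) * (1 - a*X)^2 * (1 - c*X)
      / ((1 - a*X^2) * (1 - a*p*Y*X))"
  have identity: "r2 - ratio N * r1 = r1 * R1 - R0"
    using jackson_certificate_identity[OF factors_nonzero(1,3,4,5,6,8,9,10,2)]
    unfolding r1_def r2_def R1_def R0_def X_def Y_def ratio_def .
  have terms: "jackson_term p a c N (Suc m) = t * r1" "jackson_term p a c (Suc N) (Suc m) = t * r2"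
    unfolding t_def r1_def r2_def X_def Y_def by (rule jackson_term_Suc jackson_term_Suc_Suc)+
  have certificate_Suc_Suc: "certificate N (Suc (Suc m)) = jackson_term p a c N (Suc m) * R1"
    unfolding certificate_def nat.case R1_def X_def Y_def by (simp add: power2_eq_square mult_ac)
  have certificate_Suc: "certificate N (Suc m) = t * R0"
    unfolding certificate_def nat.case t_def R0_def X_def Y_def ..
  have "jackson_term p a c (Suc N) (Suc m) - ratio N * jackson_term p a c N (Suc m)
      = t * (r2 - ratio N * r1)"
    unfolding terms by (simp add: algebra_simps)
  also have "\<dots> = t * (r1 * R1 - R0)"
    by (simp only: identity)
  also have "\<dots> = certificate N (Suc (Suc m)) - certificate N (Suc m)"
    unfolding certificate_Suc_Suc certificate_Suc terms by (simp add: algebra_simps)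
  finally show ?thesis
    unfolding Suc .
qed

theorem jackson_summation: "(\<Sum>k\<le>N. jackson_term p a c N k) = jackson_value p a c N"
proof (induction N)
  case 0
  then show ?case
    using one_minus_a_nonzero by (simp add: jackson_term_def jackson_value_def)
next
  case (Suc N)
  have "(\<Sum>k\<le>Suc N. jackson_term p a c (Suc N) k)
      = (\<Sum>k\<le>Suc N. ratio N * jackson_term p a c N k + (certificate N (Suc k) - certificate N k))"
    by (simp add: certificate_telescopes[symmetric])
  also have "\<dots> = ratio N * (\<Sum>k\<le>Suc N. jackson_term p a c N k) + certificate N (Suc (Suc N))"
    by (simp add: sum.distrib sum_distrib_left distrib_left sum_lessThan_telescope
        flip: lessThan_Suc_atMost)
  also have "\<dots> = ratio N * jackson_value p a c N"
    by (simp add: Suc.IH jackson_term_eq_0 certificate_def)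
  finally show ?case
    by (simp add: jackson_value_Suc)
qed

end

section \<open>Primitive roots of unity and the cyclotomic polynomial\<close>

lemma prod_linear_dvdI:
  fixes z :: "'b \<Rightarrow> 'a::field_gcd"
  assumes "finite A" "inj_on z A" "\<And>k. k \<in> A \<Longrightarrow> poly Q (z k) = 0"
  shows "(\<Prod>k\<in>A. [:- z k, 1:]) dvd Q"
  using assms
proof (induction A rule: finite_induct)
  case (insert k A)
  have "coprime [:- z k, 1:] (\<Prod>j\<in>A. [:- z j, 1:])"
  proof (rule prod_coprime_right)
    fix j assume "j \<in> A"
    then have "z k \<noteq> z j"
      using insert.hyps(2) insert.prems(1) by (auto dest: inj_onD)
    then show "coprime [:- z k, 1:] [:- z j, 1:]"
      by (intro prime_elem_imp_coprime prime_elem_linear_field_poly)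
        (simp_all add: poly_eq_0_iff_dvd[symmetric])
  qed
  moreover have "[:- z k, 1:] dvd Q"
    using insert.prems(2) by (simp add: poly_eq_0_iff_dvd[symmetric])
  moreover have "(\<Prod>j\<in>A. [:- z j, 1:]) dvd Q"
    using insert.IH insert.prems by simp
  ultimately show ?case
    unfolding prod.insert[OF insert.hyps] by (rule divides_mult[rotated 2])
qed simp

lemma cis_root_of_unity_eq_exp:
  "cis (2 * pi * real k / real n) = exp (2 * of_real pi * \<i> * of_nat k / of_nat n)"
  by (simp add: cis_conv_exp mult_ac)

lemma cis_root_of_unity_power_eq_1_iff:
  assumes "coprime k n" "n > 0"
  shows "cis (2 * pi * real k / real n) ^ m = 1 \<longleftrightarrow> n dvd m"
proof -
  have "cis (2 * pi * real k / real n) ^ m = cis (2 * pi * real (k * m) / real n)"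
    by (subst Complex.DeMoivre) (simp add: mult_ac)
  also have "\<dots> = 1 \<longleftrightarrow> n dvd k * m"
    using assms(2) by (simp only: cis_root_of_unity_eq_exp complex_root_unity_eq_1)
  also have "\<dots> \<longleftrightarrow> n dvd m"
    using assms(1) by (simp add: coprime_commute coprime_dvd_mult_right_iff)
  finally show ?thesis .
qed

lemma inj_on_cis_root_of_unity: "inj_on (\<lambda>k. cis (2 * pi * real k / real n)) {1..n}"
proof (rule inj_onI)
  fix j k assume jk: "j \<in> {1..n}" "k \<in> {1..n}"
    and "cis (2 * pi * real j / real n) = cis (2 * pi * real k / real n)"
  then have "j mod n = k mod n"
    by (simp add: cis_root_of_unity_eq_exp complex_root_unity_eq)
  with jk show "j = k"
    by (cases "j = n"; cases "k = n") auto
qed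

lemma cyclotomic_dvdI:
  assumes "\<And>k. 1 \<le> k \<Longrightarrow> k \<le> n \<Longrightarrow> coprime k n \<Longrightarrow> poly Q (cis (2 * pi * real k / real n)) = 0"
  shows "cyclotomic n dvd Q"
  unfolding cyclotomic_def
  by (rule prod_linear_dvdI) (auto intro: assms inj_on_subset[OF inj_on_cis_root_of_unity])

lemma coprime_cyclotomicI:
  assumes "\<And>k. 1 \<le> k \<Longrightarrow> k \<le> n \<Longrightarrow> coprime k n \<Longrightarrow> poly Q (cis (2 * pi * real k / real n)) \<noteq> 0"
  shows "coprime Q (cyclotomic n)"
  unfolding cyclotomic_def
proof (rule prod_coprime_right)
  fix k assume "k \<in> {k. 1 \<le> k \<and> k \<le> n \<and> coprime k n}"
  then have "\<not> [:- cis (2 * pi * real k / real n), 1:] dvd Q"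
    using assms by (simp add: poly_eq_0_iff_dvd[symmetric])
  then show "coprime Q [:- cis (2 * pi * real k / real n), 1:]"
    by (subst coprime_commute) (intro prime_elem_imp_coprime prime_elem_linear_field_poly; simp)
qed

lemma cyclotomic_dvd_one_minus_X_power:
  assumes "n dvd m"
  shows "cyclotomic n dvd 1 - [:0, 1:] ^ m"
  by (rule cyclotomic_dvdI) (use assms cis_root_of_unity_power_eq_1_iff in \<open>simp add: poly_power\<close>)

lemma coprime_one_minus_X_power_cyclotomic:
  assumes "\<not> n dvd m"
  shows "coprime (1 - [:0, 1:] ^ m) (cyclotomic n)"
  by (rule coprime_cyclotomicI) (use assms cis_root_of_unity_power_eq_1_iff in \<open>simp add: poly_power\<close>)

section \<open>Rational functions integral at a polynomial\<close>

text \<open>\<open>integral_at P x\<close>: \<open>x\<close> lies in the localisation of \<open>\<complex>[q]\<close> at \<open>P\<close>, in which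
  \<open>cong0_ratfun x P\<close> says that \<open>P\<close> divides \<open>x\<close>.\<close>

definition integral_at :: "complex poly \<Rightarrow> ratfun \<Rightarrow> bool" where
  "integral_at P x \<longleftrightarrow> (\<exists>A B. B \<noteq> 0 \<and> coprime B P \<and> x = Fract A B)"

definition unit_at :: "complex poly \<Rightarrow> ratfun \<Rightarrow> bool" where
  "unit_at P x \<longleftrightarrow> (\<exists>A B. A \<noteq> 0 \<and> B \<noteq> 0 \<and> coprime A P \<and> coprime B P \<and> x = Fract A B)"

lemma integral_at_Fract: "integral_at P (Fract A 1)"
  unfolding integral_at_def by (intro exI[of _ A] exI[of _ 1]) simp

lemma integral_at_1 [simp]: "integral_at P 1"
  using integral_at_Fract[of P 1] by (simp add: fract_collapse)

lemma integral_at_numeral [simp]: "integral_at P (numeral k)"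
proof -
  have "(numeral k :: ratfun) = Fract (numeral k) 1"
    using of_nat_fract[of "numeral k"] by simp
  then show ?thesis
    by (metis integral_at_Fract)
qed

lemma integral_at_add [intro]:
  assumes "integral_at P x" "integral_at P y"
  shows "integral_at P (x + y)"
proof -
  obtain A B C D where "B \<noteq> 0" "coprime B P" "x = Fract A B" "D \<noteq> 0" "coprime D P" "y = Fract C D"
    using assms unfolding integral_at_def by blast
  then show ?thesis
    unfolding integral_at_def by (intro exI[of _ "A * D + C * B"] exI[of _ "B * D"]) simp
qed

lemma integral_at_mult [intro]:
  assumes "integral_at P x" "integral_at P y"
  shows "integral_at P (x * y)"
proof -
  obtain A B C D where "B \<noteq> 0" "coprime B P" "x = Fract A B" "D \<noteq> 0" "coprime D P" "y = Fract C D"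
    using assms unfolding integral_at_def by blast
  then show ?thesis
    unfolding integral_at_def by (intro exI[of _ "A * C"] exI[of _ "B * D"]) simp
qed

lemma integral_at_minus [intro]:
  assumes "integral_at P x"
  shows "integral_at P (- x)"
proof -
  obtain A B where "B \<noteq> 0" "coprime B P" "x = Fract A B"
    using assms unfolding integral_at_def by blast
  then show ?thesis
    unfolding integral_at_def by (intro exI[of _ "- A"] exI[of _ B]) simp
qed

lemma integral_at_diff [intro]: "integral_at P x \<Longrightarrow> integral_at P y \<Longrightarrow> integral_at P (x - y)"
  using integral_at_add[of P x "- y"] by auto

lemma integral_at_power [intro]: "integral_at P x \<Longrightarrow> integral_at P (x ^ k)"
  by (induction k) auto

lemma integral_at_prod [intro]: "(\<And>i. i \<in> I \<Longrightarrow> integral_at P (f i)) \<Longrightarrow> integral_at P (\<Prod>i\<in>I. f i)"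
  by (induction I rule: infinite_finite_induct) auto

lemma integral_at_power2_iff [simp]: "integral_at (P\<^sup>2) x \<longleftrightarrow> integral_at P x"
  unfolding integral_at_def by simp

lemma unit_at_integral_at: "unit_at P x \<Longrightarrow> integral_at P x"
  unfolding unit_at_def integral_at_def by blast

lemma unit_at_nonzero: "unit_at P x \<Longrightarrow> x \<noteq> 0"
  unfolding unit_at_def by (auto simp: Zero_fract_def eq_fract)

lemma unit_at_Fract: "A \<noteq> 0 \<Longrightarrow> coprime A P \<Longrightarrow> unit_at P (Fract A 1)"
  unfolding unit_at_def by (intro exI[of _ A] exI[of _ 1]) simp

lemma unit_at_inverse [intro]:
  assumes "unit_at P x"
  shows "unit_at P (inverse x)"
proof -
  obtain A B where "A \<noteq> 0" "B \<noteq> 0" "coprime A P" "coprime B P" "x = Fract A B"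
    using assms unfolding unit_at_def by blast
  then show ?thesis
    unfolding unit_at_def by (intro exI[of _ B] exI[of _ A]) simp
qed

lemma unit_at_mult [intro]:
  assumes "unit_at P x" "unit_at P y"
  shows "unit_at P (x * y)"
proof -
  obtain A B C D where "A \<noteq> 0" "B \<noteq> 0" "coprime A P" "coprime B P" "x = Fract A B"
    and "C \<noteq> 0" "D \<noteq> 0" "coprime C P" "coprime D P" "y = Fract C D"
    using assms unfolding unit_at_def by blast
  then show ?thesis
    unfolding unit_at_def by (intro exI[of _ "A * C"] exI[of _ "B * D"]) simp
qed

lemma unit_at_minus [intro]:
  assumes "unit_at P x"
  shows "unit_at P (- x)"
proof -
  obtain A B where "A \<noteq> 0" "B \<noteq> 0" "coprime A P" "coprime B P" "x = Fract A B"
    using assms unfolding unit_at_def by blast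
  then show ?thesis
    unfolding unit_at_def by (intro exI[of _ "- A"] exI[of _ B]) simp
qed

lemma unit_at_1 [simp]: "unit_at P 1"
  using unit_at_Fract[of 1 P] by (simp add: fract_collapse)

lemma unit_at_power [intro]: "unit_at P x \<Longrightarrow> unit_at P (x ^ k)"
  by (induction k) auto

lemma unit_at_powi [intro]: "unit_at P x \<Longrightarrow> unit_at P (x powi m)"
  unfolding power_int_def by auto

lemma unit_at_prod [intro]: "(\<And>i. i \<in> I \<Longrightarrow> unit_at P (f i)) \<Longrightarrow> unit_at P (\<Prod>i\<in>I. f i)"
  by (induction I rule: infinite_finite_induct) auto

lemma unit_at_power2_iff [simp]: "unit_at (P\<^sup>2) x \<longleftrightarrow> unit_at P x"
  unfolding unit_at_def by simp

lemma integral_at_divide [intro]: "integral_at P x \<Longrightarrow> unit_at P y \<Longrightarrow> integral_at P (x / y)"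
  by (simp add: divide_inverse integral_at_mult unit_at_integral_at unit_at_inverse)

lemma cong0_ratfun_integral_at: "cong0_ratfun x P \<Longrightarrow> integral_at P x"
  unfolding cong0_ratfun_def integral_at_def by blast

lemma cong0_ratfun_0 [simp]: "cong0_ratfun 0 P"
  unfolding cong0_ratfun_def by (intro exI[of _ 0] exI[of _ 1]) (simp add: fract_collapse)

lemma cong0_ratfun_Fract: "P dvd A \<Longrightarrow> cong0_ratfun (Fract A 1) P"
  unfolding cong0_ratfun_def by (intro exI[of _ A] exI[of _ 1]) simp

lemma cong0_ratfun_add:
  assumes "cong0_ratfun x P" "cong0_ratfun y P"
  shows "cong0_ratfun (x + y) P"
proof -
  obtain A B C D where "B \<noteq> 0" "coprime B P" "P dvd A" "x = Fract A B"
    and "D \<noteq> 0" "coprime D P" "P dvd C" "y = Fract C D"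
    using assms unfolding cong0_ratfun_def by blast
  then show ?thesis
    unfolding cong0_ratfun_def by (intro exI[of _ "A * D + C * B"] exI[of _ "B * D"]) simp
qed

lemma cong0_ratfun_minus:
  assumes "cong0_ratfun x P"
  shows "cong0_ratfun (- x) P"
proof -
  obtain A B where "B \<noteq> 0" "coprime B P" "P dvd A" "x = Fract A B"
    using assms unfolding cong0_ratfun_def by blast
  then show ?thesis
    unfolding cong0_ratfun_def by (intro exI[of _ "- A"] exI[of _ B]) simp
qed

lemma cong0_ratfun_diff: "cong0_ratfun x P \<Longrightarrow> cong0_ratfun y P \<Longrightarrow> cong0_ratfun (x - y) P"
  using cong0_ratfun_add[of x P "- y"] cong0_ratfun_minus[of y P] by simp

lemma cong0_ratfun_sum: "(\<And>i. i \<in> I \<Longrightarrow> cong0_ratfun (f i) P) \<Longrightarrow> cong0_ratfun (\<Sum>i\<in>I. f i) P"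
  by (induction I rule: infinite_finite_induct) (auto intro: cong0_ratfun_add)

lemma cong0_ratfun_mult_integral:
  assumes "cong0_ratfun x P" "integral_at P y"
  shows "cong0_ratfun (x * y) P"
proof -
  obtain A B C D where "B \<noteq> 0" "coprime B P" "P dvd A" "x = Fract A B"
    and "D \<noteq> 0" "coprime D P" "y = Fract C D"
    using assms unfolding cong0_ratfun_def integral_at_def by blast
  then show ?thesis
    unfolding cong0_ratfun_def by (intro exI[of _ "A * C"] exI[of _ "B * D"]) simp
qed

lemma cong0_ratfun_integral_mult:
  "integral_at P y \<Longrightarrow> cong0_ratfun x P \<Longrightarrow> cong0_ratfun (y * x) P"
  using cong0_ratfun_mult_integral[of x P y] by (simp add: mult.commute)

lemma cong0_ratfun_divide: "cong0_ratfun x P \<Longrightarrow> unit_at P y \<Longrightarrow> cong0_ratfun (x / y) P"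
  unfolding divide_inverse by (intro cong0_ratfun_mult_integral unit_at_integral_at unit_at_inverse)

lemma cong0_ratfun_mult_power2:
  assumes "cong0_ratfun x P" "cong0_ratfun y P"
  shows "cong0_ratfun (x * y) (P\<^sup>2)"
proof -
  obtain A B C D where "B \<noteq> 0" "coprime B P" "P dvd A" "x = Fract A B"
    and "D \<noteq> 0" "coprime D P" "P dvd C" "y = Fract C D"
    using assms unfolding cong0_ratfun_def by blast
  then show ?thesis
    unfolding cong0_ratfun_def
    by (intro exI[of _ "A * C"] exI[of _ "B * D"]) (simp add: power2_eq_square mult_dvd_mono)
qed

lemma cong0_ratfun_prod_diff:
  assumes "\<And>j. j \<in> A \<Longrightarrow> integral_at P (f j)" "\<And>j. j \<in> A \<Longrightarrow> integral_at P (g j)"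
    and "\<And>j. j \<in> A \<Longrightarrow> cong0_ratfun (f j - g j) P"
  shows "cong0_ratfun (prod f A - prod g A) P"
  using assms
proof (induction A rule: infinite_finite_induct)
  case (insert j A)
  have "prod f (insert j A) - prod g (insert j A)
      = f j * (prod f A - prod g A) + (f j - g j) * prod g A"
    using insert.hyps by (simp add: algebra_simps)
  moreover have "cong0_ratfun (f j * (prod f A - prod g A)) P"
    using insert by (intro cong0_ratfun_integral_mult) auto
  moreover have "cong0_ratfun ((f j - g j) * prod g A) P"
    using insert by (intro cong0_ratfun_mult_integral integral_at_prod) auto
  ultimately show ?case
    by (simp only: cong0_ratfun_add)
qed simp_all

lemma cong0_ratfun_divide_diff:
  assumes "unit_at P D1" "unit_at P D2" "integral_at P N2"
    and "cong0_ratfun (N1 - N2) P" "cong0_ratfun (D1 - D2) P"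
  shows "cong0_ratfun (N1 / D1 - N2 / D2) P"
proof -
  have "D1 \<noteq> 0" "D2 \<noteq> 0"
    using assms(1,2) by (auto dest: unit_at_nonzero)
  then have "N1 / D1 - N2 / D2 = ((N1 - N2) * D2 - N2 * (D1 - D2)) / (D1 * D2)"
    by (simp add: field_simps)
  moreover have "cong0_ratfun ((N1 - N2) * D2 - N2 * (D1 - D2)) P"
    by (rule cong0_ratfun_diff
        [OF cong0_ratfun_mult_integral[OF assms(4) unit_at_integral_at[OF assms(2)]]
          cong0_ratfun_integral_mult[OF assms(3,5)]])
  ultimately show ?thesis
    using assms(1,2) by (simp add: cong0_ratfun_divide unit_at_mult)
qed

lemma qvar_nonzero [simp]: "qvar \<noteq> 0"
  unfolding qvar_def by (simp add: Zero_fract_def eq_fract)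

lemma qvar_powi_nonzero: "qvar powi m \<noteq> 0"
  by simp

lemma qvar_powi_add: "qvar powi (a + b) = qvar powi a * qvar powi b"
  by (rule power_int_add) simp

lemma qvar_powi_diff: "qvar powi (a - b) = qvar powi a / qvar powi b"
  by (rule power_int_diff) simp

lemma qvar_power_4: "(qvar ^ 4) ^ i = qvar powi (4 * int i)"
proof -
  have "qvar powi (4 * int i) = qvar powi int (4 * i)"
    by simp
  also have "\<dots> = (qvar ^ 4) ^ i"
    by (simp only: power_int_of_nat power_mult)
  finally show ?thesis ..
qed

lemma qvar_power: "qvar ^ k = Fract ([:0, 1:] ^ k) 1"
  by (induction k) (simp_all add: qvar_def fract_collapse)

lemma qvar_powi_eq_1_iff: "qvar powi m = 1 \<longleftrightarrow> m = 0"
proof -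
  have power_eq_1: "qvar ^ k = 1 \<longleftrightarrow> k = 0" for k
  proof -
    have "qvar ^ k = 1 \<longleftrightarrow> ([:0, 1:] ^ k :: complex poly) = 1"
      by (simp add: qvar_power One_fract_def eq_fract)
    also have "\<dots> \<longleftrightarrow> k = 0"
      by (metis degree_1 degree_linear_power power_0)
    finally show ?thesis .
  qed
  show ?thesis
    by (cases m rule: int_cases2) (simp_all add: power_int_minus power_eq_1)
qed

lemma qvar_powi_inject: "qvar powi a = qvar powi b \<longleftrightarrow> a = b"
proof -
  have "qvar powi a = qvar powi b \<longleftrightarrow> qvar powi (a - b) = 1"
    by (simp add: qvar_powi_diff)
  then show ?thesis
    by (simp add: qvar_powi_eq_1_iff)
qed

lemma unit_at_qvar: "unit_at (cyclotomic n) qvar"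
  unfolding qvar_def by (rule unit_at_Fract) (auto intro: coprime_cyclotomicI)

lemma unit_at_qvar_powi: "unit_at (cyclotomic n) (qvar powi m)"
  using unit_at_qvar by (rule unit_at_powi)

lemma one_minus_qvar_power: "1 - qvar ^ k = Fract (1 - [:0, 1:] ^ k) 1"
  by (simp add: qvar_power One_fract_def)

lemma one_minus_qvar_powi_neg: "1 - qvar powi m = - (qvar powi m) * (1 - qvar powi (- m))"
  by (simp add: algebra_simps power_int_minus)

lemma unit_at_one_minus_qvar_powi:
  assumes "\<not> int n dvd m"
  shows "unit_at (cyclotomic n) (1 - qvar powi m)"
proof -
  have unit: "unit_at (cyclotomic n) (1 - qvar ^ k)" if "\<not> n dvd k" for k
  proof -
    have "([:0, 1:] ^ k :: complex poly) \<noteq> 1"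
      using that by (metis degree_1 degree_linear_power dvd_0_right)
    then show ?thesis
      unfolding one_minus_qvar_power
      by (intro unit_at_Fract coprime_one_minus_X_power_cyclotomic that) simp
  qed
  show ?thesis
  proof (cases m rule: int_cases2)
    case (nonneg k)
    then show ?thesis
      using unit[of k] assms by simp
  next
    case (nonpos k)
    then have "unit_at (cyclotomic n) (1 - qvar powi (- m))"
      using unit[of k] assms by simp
    then show ?thesis
      unfolding one_minus_qvar_powi_neg[of m] by (intro unit_at_mult unit_at_minus unit_at_qvar_powi)
  qed
qed

lemma cong0_one_minus_qvar_powi:
  assumes "int n dvd m"
  shows "cong0_ratfun (1 - qvar powi m) (cyclotomic n)"
proof -
  have cong: "cong0_ratfun (1 - qvar ^ k) (cyclotomic n)" if "n dvd k" for k
    unfolding one_minus_qvar_power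
    by (intro cong0_ratfun_Fract cyclotomic_dvd_one_minus_X_power that)
  show ?thesis
  proof (cases m rule: int_cases2)
    case (nonneg k)
    then show ?thesis
      using cong[of k] assms by simp
  next
    case (nonpos k)
    then have "cong0_ratfun (1 - qvar powi (- m)) (cyclotomic n)"
      using cong[of k] assms by simp
    then show ?thesis
      unfolding one_minus_qvar_powi_neg[of m]
      by (intro cong0_ratfun_integral_mult integral_at_minus unit_at_integral_at unit_at_qvar_powi)
  qed
qed

lemma integral_at_qint:
  assumes "n \<noteq> 1"
  shows "integral_at (cyclotomic n) (qint m)"
proof -
  have "unit_at (cyclotomic n) (1 - qvar powi 1)"
    using assms by (intro unit_at_one_minus_qvar_powi) simp
  then show ?thesis
    unfolding qint_def
    by (intro integral_at_divide integral_at_diff integral_at_1 unit_at_integral_at unit_at_qvar_powi)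
      simp
qed

lemma qvar_powi_mult_power: "qvar powi e * (qvar ^ d) ^ j = qvar powi (e + int (d * j))"
proof -
  have "(qvar ^ d) ^ j = qvar powi int (d * j)"
    by (simp only: power_int_of_nat power_mult)
  then show ?thesis
    by (simp add: power_int_add)
qed

lemma unit_at_q_pochhammer_qvar:
  assumes "\<And>j. j < k \<Longrightarrow> \<not> int n dvd e + int (d * j)"
  shows "unit_at (cyclotomic n) (q_pochhammer (qvar powi e) (qvar ^ d) k)"
  unfolding q_pochhammer_def qvar_powi_mult_power
  using assms by (intro unit_at_prod unit_at_one_minus_qvar_powi) simp

lemma cong0_q_pochhammer_qvar:
  assumes "j < k" "int n dvd e + int (d * j)"
  shows "cong0_ratfun (q_pochhammer (qvar powi e) (qvar ^ d) k) (cyclotomic n)"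
proof -
  have "q_pochhammer (qvar powi e) (qvar ^ d) k
      = (1 - qvar powi (e + int (d * j))) * (\<Prod>i\<in>{..<k} - {j}. 1 - qvar powi (e + int (d * i)))"
    unfolding q_pochhammer_def qvar_powi_mult_power using assms(1) by (simp add: prod.remove)
  moreover have "integral_at (cyclotomic n) (\<Prod>i\<in>{..<k} - {j}. 1 - qvar powi (e + int (d * i)))"
    by (intro integral_at_prod integral_at_diff integral_at_1 unit_at_integral_at unit_at_qvar_powi)
  ultimately show ?thesis
    using assms(2) by (simp add: cong0_ratfun_mult_integral cong0_one_minus_qvar_powi)
qed

section \<open>The deformed series\<close>

text \<open>\<open>deformed_pochhammer s a p k\<close> is \<open>(a w, a/w, a, a; p)_k\<close> for \<open>s = w + 1/w\<close>; at \<open>s = 2\<close>,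
  i.e. \<open>w = 1\<close>, it is \<open>(a; p)_k^4\<close>.\<close>

definition deformed_pochhammer :: "'a::comm_ring_1 \<Rightarrow> 'a \<Rightarrow> 'a \<Rightarrow> nat \<Rightarrow> 'a" where
  "deformed_pochhammer s a p k = (\<Prod>j<k. (1 - s * (a * p ^ j) + (a * p ^ j)\<^sup>2) * (1 - a * p ^ j)\<^sup>2)"

lemma deformed_pochhammer_2: "deformed_pochhammer 2 a p k = q_pochhammer a p k ^ 4"
  unfolding deformed_pochhammer_def q_pochhammer_def prod_power_distrib
  by (rule prod.cong) (simp_all add: algebra_simps power2_eq_square power4_eq_xxxx)

lemma deformed_pochhammer_symmetric:
  fixes w :: "'a::field"
  assumes "w \<noteq> 0"
  shows "deformed_pochhammer (w + inverse w) a p k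
    = q_pochhammer (a * w) p k * q_pochhammer (a / w) p k * q_pochhammer a p k ^ 2"
  unfolding deformed_pochhammer_def q_pochhammer_def prod_power_distrib prod.distrib[symmetric]
  using assms by (intro prod.cong) (simp_all add: field_simps power2_eq_square)

lemma cong0_deformed_pochhammer_diff:
  assumes "integral_at P a" "integral_at P p" "integral_at P s" "cong0_ratfun u P"
  shows "cong0_ratfun (deformed_pochhammer (s + u) a p k - deformed_pochhammer s a p k) P"
  unfolding deformed_pochhammer_def
proof (rule cong0_ratfun_prod_diff)
  have u: "integral_at P u"
    using assms(4) by (rule cong0_ratfun_integral_at)
  fix j
  show "integral_at P ((1 - (s + u) * (a * p ^ j) + (a * p ^ j)\<^sup>2) * (1 - a * p ^ j)\<^sup>2)"
    "integral_at P ((1 - s * (a * p ^ j) + (a * p ^ j)\<^sup>2) * (1 - a * p ^ j)\<^sup>2)"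
    by (intro integral_at_mult integral_at_add integral_at_diff integral_at_power integral_at_1
        assms(1-3) u)+
  have eq: "(1 - (s + u) * (a * p ^ j) + (a * p ^ j)\<^sup>2) * (1 - a * p ^ j)\<^sup>2
      - (1 - s * (a * p ^ j) + (a * p ^ j)\<^sup>2) * (1 - a * p ^ j)\<^sup>2
    = u * (- (a * p ^ j) * (1 - a * p ^ j)\<^sup>2)"
    by (simp add: algebra_simps)
  show "cong0_ratfun ((1 - (s + u) * (a * p ^ j) + (a * p ^ j)\<^sup>2) * (1 - a * p ^ j)\<^sup>2
      - (1 - s * (a * p ^ j) + (a * p ^ j)\<^sup>2) * (1 - a * p ^ j)\<^sup>2) P"
    unfolding eq by (rule cong0_ratfun_mult_integral[OF assms(4)])
      (intro integral_at_mult integral_at_minus integral_at_power integral_at_diff integral_at_1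
        assms(1,2))
qed

definition deformed_term :: "int \<Rightarrow> ratfun \<Rightarrow> nat \<Rightarrow> ratfun" where
  "deformed_term r s k = qint (8 * int k + r)
     * deformed_pochhammer s (qvar powi r) (qvar ^ 4) k / deformed_pochhammer s (qvar ^ 4) (qvar ^ 4) k
     * qvar powi ((4 - 2 * r) * int k)"

lemma deformed_term_2:
  "deformed_term r 2 k = qint (8 * int k + r)
     * (qpoch (qvar powi r) (qvar ^ 4) k) ^ 4 / (qpoch (qvar ^ 4) (qvar ^ 4) k) ^ 4
     * qvar powi ((4 - 2 * r) * int k)"
  by (simp add: deformed_term_def deformed_pochhammer_2 qpoch_def q_pochhammer_def)

text \<open>At \<open>w = q^(3n)\<close> one has \<open>q^r / w = q^(-4N)\<close>, so the deformed series terminates and is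
  summed by Jackson's formula with base \<open>q^4\<close>, \<open>a = q^r\<close> and \<open>c = q^r w\<close>.\<close>

locale q_supercongruence_setting =
  fixes r :: int and n N :: nat
  assumes odd_r: "odd r" and n_gt_1: "n > 1" and odd_n: "odd n"
    and n_mod_4: "int n mod 4 = (- r) mod 4" and n_ge: "int n \<ge> max r (4 - r)"
    and four_N: "4 * int N = 3 * int n - r"
begin

lemma N_less_n: "N < n"
  using four_N n_ge by simp

lemma not_dvd_four_times:
  assumes "0 < t" "t < n"
  shows "\<not> int n dvd 4 * int t + int n * e"
proof
  assume "int n dvd 4 * int t + int n * e"
  then have "int n dvd 4 * int t"
    by (simp add: dvd_add_left_iff)
  moreover have "coprime (int n) 4"
    using odd_n coprime_power_right_iff[of "int n" 2 2] by simp
  ultimately have "n dvd t"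
    by (simp add: coprime_dvd_mult_right_iff)
  with assms show False
    by (auto dest: dvd_imp_le)
qed

lemma r_plus_four_times_nonzero: "r + 4 * int i \<noteq> 0"
proof -
  have "odd (r + 4 * int i)"
    using odd_r by simp
  then show ?thesis
    by (metis even_zero)
qed

lemma four_times_ne_3n: "4 * int i \<noteq> 3 * int n"
proof
  assume eq: "4 * int i = 3 * int n"
  have "even (4 * int i)"
    by simp
  then have "even (3 * int n)"
    unfolding eq .
  with odd_n show False
    by simp
qed

lemma four_times_ne_r_plus_3n: "4 * int i \<noteq> r + 3 * int n"
proof
  have "(r + 3 * int n) mod 4 = (r + 3 * (- r)) mod 4"
    using n_mod_4 by (metis mod_add_right_eq mod_mult_right_eq)
  also have "\<dots> = 2"
    using odd_r by (auto elim!: oddE simp: algebra_simps) presburger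
  finally have "(r + 3 * int n) mod 4 = 2" .
  moreover assume "4 * int i = r + 3 * int n"
  ultimately show False
    by (metis mod_mult_self1_is_0 zero_neq_numeral)
qed

lemma jackson_nondegenerate:
  "jackson_nondegenerate (qvar ^ 4) (qvar powi r) (qvar powi (r + 3 * int n))"
proof
  fix i :: nat
  show "qvar powi (r + 3 * int n) \<noteq> 0"
    by simp
  show "(qvar ^ 4) ^ i \<noteq> 1" if "0 < i"
    using that unfolding qvar_power_4 qvar_powi_eq_1_iff by simp
  show "qvar powi r * (qvar ^ 4) ^ i \<noteq> 1"
    using r_plus_four_times_nonzero unfolding qvar_power_4 qvar_powi_add[symmetric] qvar_powi_eq_1_iff .
  show "qvar powi r * (qvar ^ 4) ^ i \<noteq> qvar powi (r + 3 * int n)"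
    using four_times_ne_3n unfolding qvar_power_4 qvar_powi_add[symmetric] qvar_powi_inject by simp
  show "(qvar ^ 4) ^ i \<noteq> qvar powi (r + 3 * int n)"
    using four_times_ne_r_plus_3n unfolding qvar_power_4 qvar_powi_inject .
qed

interpretation jackson: jackson_nondegenerate "qvar ^ 4" "qvar powi r" "qvar powi (r + 3 * int n)"
  by (rule jackson_nondegenerate)

abbreviation w :: ratfun where
  "w \<equiv> qvar powi (3 * int n)"

lemma a_times_w: "qvar powi r * w = qvar powi (r + 3 * int n)"
  by (simp add: qvar_powi_add)

lemma deformed_term_eq_jackson_term:
  "deformed_term r (w + inverse w) k
    = qint r * jackson_term (qvar ^ 4) (qvar powi r) (qvar powi (r + 3 * int n)) N k"
proof -
  let ?p = "qvar ^ 4 :: ratfun" and ?a = "qvar powi r" and ?c = "qvar powi (r + 3 * int n)"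
  have p: "?p = qvar powi 4"
    by simp
  have a_div_w: "?a / w = inverse (?p ^ N)"
    using four_N by (simp add: qvar_power_4 power_int_minus[symmetric] flip: qvar_powi_diff)
  have "?a * ?p ^ (N + 1) = qvar powi (r + 4 * int (N + 1))"
    by (simp only: qvar_power_4 qvar_powi_add)
  also have "\<dots> = qvar powi (4 + 3 * int n)"
    using four_N by (intro arg_cong[where f = "power_int qvar"]) simp
  finally have p_w: "?p * w = ?a * ?p ^ (N + 1)"
    by (simp add: qvar_powi_add)
  have p_div_w: "?p / w = ?a * ?p / ?c"
    unfolding a_times_w[symmetric] by simp
  have qint: "qint (8 * int k + r) = qint r * ((1 - ?a * ?p ^ (2 * k)) / (1 - ?a))"
    using jackson.one_minus_a_nonzero
    by (simp add: qint_def qvar_power_4 add.commute flip: qvar_powi_add)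
  have "?p ^ N * ?p / ?c = qvar powi (4 * int N + 4 - (r + 3 * int n))"
    unfolding qvar_power_4 unfolding p qvar_powi_add[symmetric] qvar_powi_diff[symmetric] ..
  also have "\<dots> = qvar powi (4 - 2 * r)"
    using four_N by (intro arg_cong[where f = "power_int qvar"]) simp
  finally have base: "?p ^ N * ?p / ?c = qvar powi (4 - 2 * r)" .
  have "(?p / ?c) ^ k * ?p ^ (N * k) = (?p ^ N * ?p / ?c) ^ k"
    by (simp add: power_mult power_mult_distrib power_divide mult_ac)
  also have "\<dots> = qvar powi ((4 - 2 * r) * int k)"
    unfolding base power_int_mult by simp
  finally have power: "qvar powi ((4 - 2 * r) * int k) = (?p / ?c) ^ k * ?p ^ (N * k)" ..
  show ?thesis
    unfolding deformed_term_def deformed_pochhammer_symmetric[OF qvar_powi_nonzero]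
      a_times_w a_div_w p_w p_div_w q_pochhammer_inverse_power[OF power_not_zero[OF qvar_nonzero]]
      qint power jackson_term_def
    using jackson.q_pochhammer_p_nonzero jackson.q_pochhammer_a_p_div_c_nonzero
      jackson.q_pochhammer_a_power_nonzero[of "N + 1"] jackson.one_minus_a_nonzero
    by (simp add: field_simps)
qed

abbreviation \<Phi> :: "complex poly" where
  "\<Phi> \<equiv> cyclotomic n"

lemma unit_at_q_pochhammer_4_plus_multiple:
  assumes "k < n"
  shows "unit_at \<Phi> (q_pochhammer (qvar powi (4 + int n * e)) (qvar ^ 4) k)"
proof (rule unit_at_q_pochhammer_qvar)
  fix j assume "j < k"
  then show "\<not> int n dvd 4 + int n * e + int (4 * j)"
    using not_dvd_four_times[of "Suc j" e] assms by (simp add: algebra_simps)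
qed

lemma unit_at_deformed_denominators:
  assumes "k < n"
  shows "unit_at \<Phi> (deformed_pochhammer 2 (qvar ^ 4) (qvar ^ 4) k)"
    and "unit_at \<Phi> (deformed_pochhammer (w + inverse w) (qvar ^ 4) (qvar ^ 4) k)"
proof -
  note units = unit_at_q_pochhammer_4_plus_multiple[OF assms]
  show "unit_at \<Phi> (deformed_pochhammer 2 (qvar ^ 4) (qvar ^ 4) k)"
    using units[of 0] by (simp add: deformed_pochhammer_2 unit_at_power)
  have "qvar ^ 4 * w = qvar powi (4 + int n * 3)" "qvar ^ 4 / w = qvar powi (4 + int n * (- 3))"
    by (simp_all add: qvar_powi_add qvar_powi_diff mult.commute)
  then show "unit_at \<Phi> (deformed_pochhammer (w + inverse w) (qvar ^ 4) (qvar ^ 4) k)"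
    using units[of 0] units[of 3] units[of "- 3"]
    by (simp add: deformed_pochhammer_symmetric unit_at_mult unit_at_power)
qed

lemma cong0_deformation: "cong0_ratfun ((1 - w)\<^sup>2 * inverse w) (\<Phi>\<^sup>2)"
proof -
  have "cong0_ratfun (1 - w) \<Phi>"
    by (rule cong0_one_minus_qvar_powi) simp
  then have "cong0_ratfun ((1 - w) * (1 - w)) (\<Phi>\<^sup>2)"
    using cong0_ratfun_mult_power2 by blast
  then show ?thesis
    unfolding power2_eq_square[of "1 - w"] by (rule cong0_ratfun_mult_integral)
      (simp add: unit_at_integral_at unit_at_inverse unit_at_qvar_powi)
qed

lemma cong0_deformed_term_diff:
  assumes "k < n"
  shows "cong0_ratfun (deformed_term r 2 k - deformed_term r (w + inverse w) k) (\<Phi>\<^sup>2)"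
proof -
  have w: "w + inverse w = 2 + (1 - w)\<^sup>2 * inverse w"
    by (simp add: field_simps power2_eq_square)
  have integral: "integral_at (\<Phi>\<^sup>2) (qvar powi r)" "integral_at (\<Phi>\<^sup>2) qvar"
    by (simp_all add: unit_at_integral_at unit_at_qvar_powi unit_at_qvar)
  let ?num = "\<lambda>s. deformed_pochhammer s (qvar powi r) (qvar ^ 4) k"
  let ?den = "\<lambda>s. deformed_pochhammer s (qvar ^ 4) (qvar ^ 4) k"
  have "cong0_ratfun (?num (w + inverse w) / ?den (w + inverse w) - ?num 2 / ?den 2) (\<Phi>\<^sup>2)"
  proof (rule cong0_ratfun_divide_diff)
    show "unit_at (\<Phi>\<^sup>2) (?den (w + inverse w))" "unit_at (\<Phi>\<^sup>2) (?den 2)"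
      using unit_at_deformed_denominators[OF assms] by simp_all
    show "integral_at (\<Phi>\<^sup>2) (?num 2)"
      unfolding deformed_pochhammer_def using integral
      by (intro integral_at_prod integral_at_mult integral_at_add integral_at_diff integral_at_power
          integral_at_1 integral_at_numeral) simp_all
    show "cong0_ratfun (?num (w + inverse w) - ?num 2) (\<Phi>\<^sup>2)"
      "cong0_ratfun (?den (w + inverse w) - ?den 2) (\<Phi>\<^sup>2)"
      unfolding w using integral cong0_deformation
      by (intro cong0_deformed_pochhammer_diff integral_at_power; simp)+
  qed
  moreover have "integral_at (\<Phi>\<^sup>2) (qint (8 * int k + r) * qvar powi ((4 - 2 * r) * int k))"
    using n_gt_1 by (simp add: integral_at_mult integral_at_qint unit_at_integral_at unit_at_qvar_powi)
  ultimately have "cong0_ratfun (- (qint (8 * int k + r) * qvar powi ((4 - 2 * r) * int k)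
      * (?num (w + inverse w) / ?den (w + inverse w) - ?num 2 / ?den 2))) (\<Phi>\<^sup>2)"
    by (intro cong0_ratfun_minus cong0_ratfun_integral_mult)
  then show ?thesis
    by (simp add: deformed_term_def algebra_simps)
qed

lemma vanishing_factor_index: "\<exists>j < N. 4 * int j = int n + r - 4"
proof -
  have "4 dvd int n - (- r)"
    using n_mod_4 by (simp only: mod_eq_dvd_iff)
  then obtain t where t: "int n + r = 4 * t"
    by auto
  have "0 \<le> t - 1" "t - 1 < int N"
    using t four_N n_ge by simp_all
  then have "nat (t - 1) < N" "4 * int (nat (t - 1)) = int n + r - 4"
    using t by simp_all
  then show ?thesis
    by blast
qed

lemma cong0_jackson_value:
  "cong0_ratfun (jackson_value (qvar ^ 4) (qvar powi r) (qvar powi (r + 3 * int n)) N) (\<Phi>\<^sup>2)"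
proof -
  have N_pos: "0 < N"
    using four_N n_ge n_gt_1 by simp
  obtain j where "j < N" and j: "4 * int j = int n + r - 4"
    using vanishing_factor_index by blast
  have "qvar powi r * qvar ^ 4 = qvar powi (r + 4)"
    by (simp add: qvar_powi_add)
  moreover have "cong0_ratfun (q_pochhammer (qvar powi (r + 4)) (qvar ^ 4) N) \<Phi>"
    using N_pos four_N by (intro cong0_q_pochhammer_qvar[of "N - 1"]) (simp_all add: of_nat_diff)
  moreover have "qvar ^ 4 / qvar powi (r + 3 * int n) = qvar powi (4 - (r + 3 * int n))"
    by (simp add: qvar_powi_diff)
  moreover have "cong0_ratfun (q_pochhammer (qvar powi (4 - (r + 3 * int n))) (qvar ^ 4) N) \<Phi>"
    using \<open>j < N\<close> j by (intro cong0_q_pochhammer_qvar[of j]) simp_all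
  ultimately have numerator: "cong0_ratfun (q_pochhammer (qvar powi r * qvar ^ 4) (qvar ^ 4) N
      * q_pochhammer (qvar ^ 4 / qvar powi (r + 3 * int n)) (qvar ^ 4) N) (\<Phi>\<^sup>2)"
    by (simp only: cong0_ratfun_mult_power2)
  note units = unit_at_q_pochhammer_4_plus_multiple[OF N_less_n]
  have "qvar powi r * qvar ^ 4 / qvar powi (r + 3 * int n) = qvar powi (4 + int n * (- 3))"
    unfolding a_times_w[symmetric] by (simp add: qvar_powi_diff mult.commute)
  moreover have "qvar ^ 4 = qvar powi (4 + int n * 0)"
    by simp
  ultimately have "unit_at \<Phi>
      (q_pochhammer (qvar powi r * qvar ^ 4 / qvar powi (r + 3 * int n)) (qvar ^ 4) N
        * q_pochhammer (qvar ^ 4) (qvar ^ 4) N)"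
    using units[of "- 3"] units[of 0] by (simp only: unit_at_mult)
  then show ?thesis
    unfolding jackson_value_def by (intro cong0_ratfun_divide[OF numerator]) simp
qed

theorem cong0_sum_deformed_term_2: "cong0_ratfun (\<Sum>k<n. deformed_term r 2 k) (\<Phi>\<^sup>2)"
proof -
  have "(\<Sum>k<n. jackson_term (qvar ^ 4) (qvar powi r) (qvar powi (r + 3 * int n)) N k)
      = (\<Sum>k\<le>N. jackson_term (qvar ^ 4) (qvar powi r) (qvar powi (r + 3 * int n)) N k)"
    using N_less_n by (intro sum.mono_neutral_right) (auto simp: jackson_term_eq_0)
  also have "\<dots> = jackson_value (qvar ^ 4) (qvar powi r) (qvar powi (r + 3 * int n)) N"
    by (rule jackson.jackson_summation)
  finally have "(\<Sum>k<n. deformed_term r (w + inverse w) k)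
      = qint r * jackson_value (qvar ^ 4) (qvar powi r) (qvar powi (r + 3 * int n)) N"
    by (simp add: deformed_term_eq_jackson_term flip: sum_distrib_left)
  then have "(\<Sum>k<n. deformed_term r 2 k)
      = (\<Sum>k<n. deformed_term r 2 k - deformed_term r (w + inverse w) k)
        + qint r * jackson_value (qvar ^ 4) (qvar powi r) (qvar powi (r + 3 * int n)) N"
    by (simp add: sum_subtractf)
  moreover have "cong0_ratfun (\<Sum>k<n. deformed_term r 2 k - deformed_term r (w + inverse w) k) (\<Phi>\<^sup>2)"
    by (rule cong0_ratfun_sum) (simp add: cong0_deformed_term_diff)
  moreover have "cong0_ratfun
      (qint r * jackson_value (qvar ^ 4) (qvar powi r) (qvar powi (r + 3 * int n)) N) (\<Phi>\<^sup>2)"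
    using n_gt_1 by (intro cong0_ratfun_integral_mult cong0_jackson_value) (simp add: integral_at_qint)
  ultimately show ?thesis
    by (simp add: cong0_ratfun_add)
qed

end

theorem theorem5:
  fixes r n :: int
  assumes "odd r" and "n > 1" and "odd n"
    and "n mod 4 = (- r) mod 4"
    and "n \<ge> max r (4 - r)"
  shows "cong0_ratfun
    (\<Sum>k<nat n. qint (8 * int k + r)
        * (qpoch (qvar powi r) (qvar ^ 4) k) ^ 4 / (qpoch (qvar ^ 4) (qvar ^ 4) k) ^ 4
        * qvar powi ((4 - 2 * r) * int k))
    ((cyclotomic (nat n))\<^sup>2)"
proof -
  have n: "int (nat n) = n"
    using assms(2) by simp
  have "4 dvd n - (- r)"
    using assms(4) by (simp only: mod_eq_dvd_iff)
  then obtain t where t: "n + r = 4 * t"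
    by auto
  have "r \<le> n"
    using assms(5) by simp
  interpret q_supercongruence_setting r "nat n" "nat (n - t)"
  proof
    show "odd r" "int (nat n) mod 4 = (- r) mod 4" "max r (4 - r) \<le> int (nat n)"
      using assms(1,4,5) n by simp_all
    show "1 < nat n" "odd (nat n)"
      using assms(2,3) by (simp_all add: even_nat_iff)
    show "4 * int (nat (n - t)) = 3 * int (nat n) - r"
      using t \<open>r \<le> n\<close> assms(2) n by simp
  qed
  show ?thesis
    unfolding deformed_term_2[symmetric] by (rule cong0_sum_deformed_term_2)
qed

end
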